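(* Let $X(t)=\sum_{k=1}^{N(t)}X_k$ be a compound Poisson process with rate $\lambda>0$ and iid symmetric jumps $X_k$ that are not a.s. zero. Then $$\limsup_{u\to\infty}\frac{P(\sup_{0\le t\le1}X(t)>u)}{P(X(1)>u)}<2.$$ *)

theory Defs
  imports "HOL-Probability.Probability"
begin

text \<open>Poisson counting process built from inter-arrival times E 0, E 1, ...:
  the n-th arrival time is E 0 + ... + E (n-1), and N(t) counts arrivals in [0,t].\<close>
definition poisson_count :: "(nat \<Rightarrow> 'a \<Rightarrow> real) \<Rightarrow> real \<Rightarrow> 'a \<Rightarrow> nat" where
  "poisson_count E t \<omega> = card {n::nat. 1 \<le> n \<and> (\<Sum>i<n. E i \<omega>) \<le> t}"

definition compound_poisson :: "(nat \<Rightarrow> 'a \<Rightarrow> real) \<Rightarrow> (nat \<Rightarrow> 'a \<Rightarrow> real) \<Rightarrow> real \<Rightarrow> 'a \<Rightarrow> real" where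
  "compound_poisson Y E t \<omega> = (\<Sum>k < poisson_count E t \<omega>. Y k \<omega>)"

end

theory Submission
  imports Defs
begin

text \<open>
  Write T n = E 0 + ... + E (n-1) for the arrival times, S n = Y 0 + ... + Y (n-1) for the
  partial sums of the jumps and N = N(1), so that X(t) = S (N t) and the supremum of X over
  [0,1] is the largest of S 0, ..., S N.  For a level u, let B k be the first-passage event
  "k is the least index with S k > u".  On B k with k \<le> N we have X(1) = S k + R k, where
  R k = Y k + ... + Y (N-1) is the residual sum.  Two facts control R k:
  (i) Reflection: negating the jumps Y k, Y (k+1), ... preserves the joint law of all jumps
      and waiting times, fixes B k and N, and negates R k; so P(B k, R k < 0) = P(B k, R k > 0).
  (ii) Stopping: E k is independent of the jumps and waiting times with index < k and exceeds
      1 with probability exp(-lam), which forces N = k and R k = 0; so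
      P(B k, N = k) \<ge> exp(-lam) P(B k, k \<le> N).
  Together they give (1 + exp(-lam)) P(B k, k \<le> N) \<le> 2 P(B k, k \<le> N, R k \<ge> 0), and summing
  over the disjoint events B k yields P(sup X > u) \<le> 2/(1 + exp(-lam)) P(X(1) > u) for every u.
  Hence the limsup is at most 2/(1 + exp(-lam)) < 2.
\<close>

section \<open>Sample-path facts about the counting function\<close>

lemma measurable_poisson_count[measurable]:
  assumes [measurable]: "\<And>i. E i \<in> borel_measurable \<Omega>"
  shows "poisson_count E t \<in> measurable \<Omega> (count_space UNIV)"
  unfolding poisson_count_def[abs_def] by measurable

lemma poisson_count_ge_iff:
  fixes E :: "nat \<Rightarrow> 'a \<Rightarrow> real"
  assumes nonneg: "\<And>i. 0 \<le> E i \<omega>" and "0 \<le> t" and exceeds: "t < (\<Sum>i<n. E i \<omega>)"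
  shows "k \<le> poisson_count E t \<omega> \<longleftrightarrow> (\<Sum>i<k. E i \<omega>) \<le> t"
proof -
  let ?T = "\<lambda>m. \<Sum>i<m. E i \<omega>"
  let ?P = "{m. 1 \<le> m \<and> ?T m \<le> t}"
  have mono: "?T m \<le> ?T m'" if "m \<le> m'" for m m'
    using nonneg that by (intro sum_mono2) auto
  have "?P \<subseteq> {..<n}"
  proof
    fix m assume "m \<in> ?P"
    then show "m \<in> {..<n}" using mono[of n m] exceeds by (cases "n \<le> m") auto
  qed
  then have fin: "finite ?P"
    by (rule finite_subset) simp
  have count: "poisson_count E t \<omega> = card ?P"
    by (simp add: poisson_count_def)
  show ?thesis
  proof
    assume k: "k \<le> poisson_count E t \<omega>"
    show "?T k \<le> t"
    proof (rule ccontr)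
      assume late: "\<not> ?T k \<le> t"
      have "k \<noteq> 0"
      proof
        assume "k = 0"
        with late \<open>0 \<le> t\<close> show False by simp
      qed
      have "?P \<subseteq> {1..<k}"
      proof
        fix m assume "m \<in> ?P"
        then show "m \<in> {1..<k}" using mono[of k m] late by (cases "k \<le> m") auto
      qed
      then have "card ?P \<le> k - 1"
        using card_mono[of "{1..<k}" ?P] by simp
      with k count \<open>k \<noteq> 0\<close> show False by simp
    qed
  next
    assume "?T k \<le> t"
    have "{1..k} \<subseteq> ?P"
    proof
      fix m assume "m \<in> {1..k}"
      then show "m \<in> ?P" using mono[of m k] \<open>?T k \<le> t\<close> by auto
    qed
    then have "card {1..k} \<le> card ?P"
      by (rule card_mono[OF fin])
    with count show "k \<le> poisson_count E t \<omega>"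
      by simp
  qed
qed

lemma poisson_count_mono:
  fixes E :: "nat \<Rightarrow> 'a \<Rightarrow> real"
  assumes "\<And>i. 0 \<le> E i \<omega>" and "0 \<le> s" "s \<le> t" "t < (\<Sum>i<n. E i \<omega>)"
  shows "poisson_count E s \<omega> \<le> poisson_count E t \<omega>"
  using poisson_count_ge_iff[of E \<omega> s n "poisson_count E s \<omega>"]
    poisson_count_ge_iff[of E \<omega> t n "poisson_count E s \<omega>"] assms by auto

text \<open>A coordinate projection is measurable on a product space even for coordinates outside the
  index set (it is then constant); this lets the measurability prover handle sums over the
  coordinates of a finite product.\<close>
lemma measurable_component_any[measurable]:
  "(\<lambda>g. g i) \<in> borel_measurable (PiM I (\<lambda>_. (borel :: 'b::topological_space measure)))"
proof (cases "i \<in> I")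
  case True
  then show ?thesis by (rule measurable_component_singleton)
next
  case False
  then have "\<And>g. g \<in> space (PiM I (\<lambda>_. borel)) \<Longrightarrow> g i = undefined"
    by (auto simp: space_PiM PiE_def extensional_def)
  then show ?thesis
    by (subst measurable_cong[where g="\<lambda>_. undefined"]) auto
qed

text \<open>Negate the jump coordinates with index \<ge> k of a joint sample (jumps tagged Inl, waiting
  times tagged Inr).\<close>
definition flip_jumps_from :: "nat \<Rightarrow> nat + nat \<Rightarrow> real \<Rightarrow> real" where
  "flip_jumps_from k j x = (case j of Inl i \<Rightarrow> if k \<le> i then - x else x | Inr _ \<Rightarrow> x)"

section \<open>The probabilistic setting\<close>

locale compound_poisson_model = prob_space M for M :: "'a measure" +
  fixes Y E :: "nat \<Rightarrow> 'a \<Rightarrow> real" and lam :: real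
  assumes lam_pos: "lam > 0"
    and indep: "indep_vars (\<lambda>_. borel) (case_sum Y E) UNIV"
    and expo: "\<And>i. distributed M lborel (E i) (exponential_density lam)"
    and Y_measurable[measurable]: "\<And>k. Y k \<in> borel_measurable M"
    and ident: "\<And>k. distr M borel (Y k) = distr M borel (Y 0)"
    and symm: "distr M borel (\<lambda>\<omega>. - Y 0 \<omega>) = distr M borel (Y 0)"
begin

abbreviation jump_sum :: "nat \<Rightarrow> 'a \<Rightarrow> real" where
  "jump_sum n \<omega> \<equiv> \<Sum>i<n. Y i \<omega>"

abbreviation arrival :: "nat \<Rightarrow> 'a \<Rightarrow> real" where
  "arrival n \<omega> \<equiv> \<Sum>i<n. E i \<omega>"

abbreviation count1 :: "'a \<Rightarrow> nat" where
  "count1 \<omega> \<equiv> poisson_count E 1 \<omega>"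

abbreviation residual :: "nat \<Rightarrow> 'a \<Rightarrow> real" where
  "residual k \<omega> \<equiv> \<Sum>i\<in>{k..<count1 \<omega>}. Y i \<omega>"

abbreviation first_passage :: "real \<Rightarrow> nat \<Rightarrow> 'a \<Rightarrow> bool" where
  "first_passage u k \<omega> \<equiv> u < jump_sum k \<omega> \<and> (\<forall>j<k. jump_sum j \<omega> \<le> u)"

lemma E_measurable[measurable]: "E i \<in> borel_measurable M"
  using expo[of i] by (auto dest: distributed_measurable)

lemma count1_measurable[measurable]: "count1 \<in> measurable M (count_space UNIV)"
  by measurable

lemma residual_measurable[measurable]: "residual k \<in> borel_measurable M"
  by (rule measurable_compose_countable[where f="\<lambda>n \<omega>. \<Sum>i\<in>{k..<n}. Y i \<omega>" and g=count1])
    measurable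

lemma compound_poisson_measurable[measurable]:
  "(\<lambda>\<omega>. compound_poisson Y E t \<omega>) \<in> borel_measurable M"
  unfolding compound_poisson_def[abs_def]
  by (rule measurable_compose_countable[where f="\<lambda>n \<omega>. \<Sum>i<n. Y i \<omega>" and g="poisson_count E t"])
    measurable

lemma prob_wait_le_1: "prob {\<omega>\<in>space M. E k \<omega> \<le> 1} = 1 - exp (- lam)"
  using exponential_distributedD_le[OF expo[of k] _ lam_pos, of 1] by simp

lemma AE_waits_pos: "AE \<omega> in M. \<forall>i. 0 < E i \<omega>"
proof (rule AE_all_countable[THEN iffD2], rule allI)
  fix i
  have "prob {\<omega>\<in>space M. E i \<omega> \<le> 0} = 0"
    using exponential_distributedD_le[OF expo[of i] _ lam_pos, of 0] by simp
  then show "AE \<omega> in M. 0 < E i \<omega>"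
    by (subst (asm) prob_Collect_eq_0) (auto simp: not_le)
qed

lemma prob_past_and_next_wait:
  fixes k :: nat and q :: "(nat + nat \<Rightarrow> real) \<Rightarrow> bool" and Q :: "'a \<Rightarrow> bool"
  assumes q[measurable]: "Measurable.pred (PiM (Inl ` {..<k} \<union> Inr ` {..<k}) (\<lambda>_. borel)) q"
    and qQ: "\<And>\<omega>. \<omega> \<in> space M \<Longrightarrow>
      q (restrict (\<lambda>j. case_sum Y E j \<omega>) (Inl ` {..<k} \<union> Inr ` {..<k})) = Q \<omega>"
  shows "prob {\<omega>\<in>space M. Q \<omega> \<and> E k \<omega> \<le> 1} = prob {\<omega>\<in>space M. Q \<omega>} * (1 - exp (- lam))"
proof -
  let ?I = "Inl ` {..<k} \<union> Inr ` {..<k} :: (nat + nat) set"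
  let ?past = "\<lambda>\<omega>. restrict (\<lambda>j. case_sum Y E j \<omega>) ?I"
  let ?next = "\<lambda>\<omega>. restrict (\<lambda>j. case_sum Y E j \<omega>) {Inr k}"
  let ?A = "{g\<in>space (PiM ?I (\<lambda>_. borel)). q g}"
  let ?B = "{g\<in>space (PiM {Inr k} (\<lambda>_. borel)). g (Inr k) \<le> (1::real)}"
  have "indep_var (PiM ?I (\<lambda>_. borel)) ?past (PiM {Inr k} (\<lambda>_. borel)) ?next"
    by (rule indep_var_restrict[OF indep]) auto
  moreover have "?A \<in> sets (PiM ?I (\<lambda>_. borel))" "?B \<in> sets (PiM {Inr k} (\<lambda>_. borel))"
    by measurable
  ultimately have "prob ((\<lambda>\<omega>. (?past \<omega>, ?next \<omega>)) -` (?A \<times> ?B) \<inter> space M)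
      = prob (?past -` ?A \<inter> space M) * prob (?next -` ?B \<inter> space M)"
    by (rule indep_varD)
  moreover have "(\<lambda>\<omega>. (?past \<omega>, ?next \<omega>)) -` (?A \<times> ?B) \<inter> space M
      = {\<omega>\<in>space M. Q \<omega> \<and> E k \<omega> \<le> 1}"
    and "?past -` ?A \<inter> space M = {\<omega>\<in>space M. Q \<omega>}"
    and "?next -` ?B \<inter> space M = {\<omega>\<in>space M. E k \<omega> \<le> 1}"
    using qQ by (auto simp: space_PiM)
  ultimately show ?thesis
    using prob_wait_le_1[of k] by simp
qed

lemma sum_restrict_past:
  assumes "n \<le> k"
  shows "(\<Sum>i<n. restrict (\<lambda>j. case_sum Y E j \<omega>) (Inl ` {..<k} \<union> Inr ` {..<k}) (Inl i)) = jump_sum n \<omega>"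
    and "(\<Sum>i<n. restrict (\<lambda>j. case_sum Y E j \<omega>) (Inl ` {..<k} \<union> Inr ` {..<k}) (Inr i)) = arrival n \<omega>"
  using assms by (auto intro: sum.cong)

lemma prob_arrival_le_1: "prob {\<omega>\<in>space M. arrival n \<omega> \<le> 1} \<le> (1 - exp (- lam)) ^ n"
proof (induction n)
  case 0
  show ?case by simp
next
  case (Suc n)
  have "prob {\<omega>\<in>space M. arrival (Suc n) \<omega> \<le> 1} \<le> prob {\<omega>\<in>space M. arrival n \<omega> \<le> 1 \<and> E n \<omega> \<le> 1}"
  proof (rule finite_measure_mono_AE)
    show "AE \<omega> in M. \<omega> \<in> {\<omega>\<in>space M. arrival (Suc n) \<omega> \<le> 1} \<longrightarrow>
        \<omega> \<in> {\<omega>\<in>space M. arrival n \<omega> \<le> 1 \<and> E n \<omega> \<le> 1}"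
      using AE_waits_pos
    proof eventually_elim
      case (elim \<omega>)
      then have "0 < E n \<omega>" "0 \<le> arrival n \<omega>"
        by (auto intro: sum_nonneg less_imp_le)
      then show ?case by auto
    qed
  qed measurable
  also have "\<dots> = prob {\<omega>\<in>space M. arrival n \<omega> \<le> 1} * (1 - exp (- lam))"
    by (rule prob_past_and_next_wait[where q="\<lambda>g. (\<Sum>i<n. g (Inr i)) \<le> 1"])
      (simp_all add: sum_restrict_past)
  also have "\<dots> \<le> (1 - exp (- lam)) ^ n * (1 - exp (- lam))"
    using Suc.IH lam_pos by (intro mult_right_mono) auto
  finally show ?case by (simp add: mult.commute)
qed

lemma AE_arrival_exceeds_1: "AE \<omega> in M. \<exists>n. 1 < arrival n \<omega>"
proof -
  let ?D = "{\<omega>\<in>space M. \<forall>n. arrival n \<omega> \<le> 1}"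
  have "prob ?D \<le> (1 - exp (- lam)) ^ n" for n
    using finite_measure_mono[of ?D "{\<omega>\<in>space M. arrival n \<omega> \<le> 1}"] prob_arrival_le_1[of n]
    by fastforce
  moreover have "(\<lambda>n. (1 - exp (- lam)) ^ n) \<longlonglongrightarrow> 0"
    using lam_pos by (intro LIMSEQ_power_zero) auto
  ultimately have "prob ?D \<le> 0"
    by (intro LIMSEQ_le_const) auto
  then have "prob ?D = 0"
    using measure_nonneg[of M ?D] by linarith
  then show ?thesis
    by (subst (asm) prob_Collect_eq_0) (auto simp: not_le)
qed

lemma AE_count1_ge_iff: "AE \<omega> in M. \<forall>k. k \<le> count1 \<omega> \<longleftrightarrow> arrival k \<omega> \<le> 1"
  using AE_waits_pos AE_arrival_exceeds_1
proof eventually_elim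
  case (elim \<omega>)
  then have nonneg: "\<And>i. 0 \<le> E i \<omega>" by (auto intro: less_imp_le)
  obtain n where "1 < arrival n \<omega>" using elim by blast
  then show ?case
    using poisson_count_ge_iff[where E=E and \<omega>=\<omega>, OF nonneg zero_le_one] by blast
qed

lemma AE_count_le_count1: "AE \<omega> in M. \<forall>t\<in>{0..1}. poisson_count E t \<omega> \<le> count1 \<omega>"
  using AE_waits_pos AE_arrival_exceeds_1
proof eventually_elim
  case (elim \<omega>)
  then have nonneg: "\<And>i. 0 \<le> E i \<omega>" by (auto intro: less_imp_le)
  obtain n where "1 < arrival n \<omega>" using elim by blast
  then show ?case
    using poisson_count_mono[where E=E and \<omega>=\<omega>, OF nonneg] by auto
qed

text \<open>Stopping: after a first passage at k, with probability at least exp(-lam) the next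
  waiting time is too long for a (k+1)-st arrival by time 1.  Up to null sets, k \<le> N(1) means
  T k \<le> 1, an event of the past of index k; it is independent of E k, and on it E k > 1
  forces N(1) = k.\<close>
lemma prob_stop_at_passage:
  "exp (- lam) * prob {\<omega>\<in>space M. first_passage u k \<omega> \<and> k \<le> count1 \<omega>}
     \<le> prob {\<omega>\<in>space M. first_passage u k \<omega> \<and> count1 \<omega> = k}"
proof -
  let ?G = "{\<omega>\<in>space M. first_passage u k \<omega> \<and> arrival k \<omega> \<le> 1}"
  let ?GW = "{\<omega>\<in>space M. (first_passage u k \<omega> \<and> arrival k \<omega> \<le> 1) \<and> E k \<omega> \<le> 1}"
  have G_eq: "prob {\<omega>\<in>space M. first_passage u k \<omega> \<and> k \<le> count1 \<omega>} = prob ?G"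
    by (rule finite_measure_eq_AE) (use AE_count1_ge_iff in auto)
  have GW_eq: "prob ?GW = prob ?G * (1 - exp (- lam))"
  proof (rule prob_past_and_next_wait)
    show "Measurable.pred (PiM (Inl ` {..<k} \<union> Inr ` {..<k}) (\<lambda>_. borel))
      (\<lambda>g. (u < (\<Sum>i<k. g (Inl i)) \<and> (\<forall>j<k. (\<Sum>i<j. g (Inl i)) \<le> u)) \<and> (\<Sum>i<k. g (Inr i)) \<le> (1::real))"
      by measurable
  qed (simp add: sum_restrict_past)
  have "prob (?G - ?GW) = prob ?G - prob ?GW"
    by (rule finite_measure_Diff) (measurable, blast)
  moreover have "prob (?G - ?GW) \<le> prob {\<omega>\<in>space M. first_passage u k \<omega> \<and> count1 \<omega> = k}"
  proof (rule finite_measure_mono_AE)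
    show "AE \<omega> in M. \<omega> \<in> ?G - ?GW \<longrightarrow> \<omega> \<in> {\<omega>\<in>space M. first_passage u k \<omega> \<and> count1 \<omega> = k}"
      using AE_count1_ge_iff AE_waits_pos
    proof eventually_elim
      case (elim \<omega>)
      have "0 \<le> arrival k \<omega>" using elim by (intro sum_nonneg) (auto intro: less_imp_le)
      then show ?case
        using elim(1)[rule_format, of k] elim(1)[rule_format, of "Suc k"] by auto
    qed
  qed measurable
  ultimately show ?thesis
    using G_eq GW_eq by (simp add: algebra_simps)
qed

lemma distr_neg_jump: "distr M borel (\<lambda>\<omega>. - Y i \<omega>) = distr M borel (Y i)"
proof -
  have "distr M borel (\<lambda>\<omega>. - Y i \<omega>) = distr (distr M borel (Y i)) borel uminus"
    by (subst distr_distr) (auto simp: comp_def)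
  also have "\<dots> = distr (distr M borel (Y 0)) borel uminus"
    by (simp only: ident[of i])
  also have "\<dots> = distr M borel (\<lambda>\<omega>. - Y 0 \<omega>)"
    by (subst distr_distr) (auto simp: comp_def)
  also have "\<dots> = distr M borel (Y i)"
    using symm ident[of i] by (simp only:)
  finally show ?thesis .
qed

lemma reflection:
  assumes A: "A \<in> sets (PiM (UNIV :: (nat + nat) set) (\<lambda>_. borel))"
  shows "prob {\<omega>\<in>space M. (\<lambda>j. case_sum Y E j \<omega>) \<in> A}
       = prob {\<omega>\<in>space M. (\<lambda>j. flip_jumps_from k j (case_sum Y E j \<omega>)) \<in> A}"
proof -
  let ?PS = "PiM (UNIV :: (nat + nat) set) (\<lambda>_. borel)"
  let ?X = "case_sum Y E"
  let ?Z = "\<lambda>j \<omega>. flip_jumps_from k j (?X j \<omega>)"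
  have flip_measurable[measurable]: "flip_jumps_from k j \<in> borel_measurable borel" for j
    unfolding flip_jumps_from_def by (cases j) auto
  have X_rv: "random_variable borel (?X j)" for j
    by (cases j) auto
  then have Z_rv: "random_variable borel (?Z j)" for j
    by measurable
  have Z_indep: "indep_vars (\<lambda>_. borel) ?Z UNIV"
    by (rule indep_vars_compose2[OF indep]) auto
  have same_marginals: "distr M borel (?Z j) = distr M borel (?X j)" for j
  proof (cases j)
    case (Inl i)
    then show ?thesis
      using distr_neg_jump[of i] by (cases "k \<le> i") (auto simp: flip_jumps_from_def)
  qed (simp add: flip_jumps_from_def)
  have "distr M ?PS (\<lambda>\<omega>. \<lambda>j\<in>UNIV. ?Z j \<omega>) = (\<Pi>\<^sub>M j\<in>UNIV. distr M borel (?Z j))"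
    using indep_vars_iff_distr_eq_PiM[where I=UNIV and X="?Z"] Z_rv Z_indep by simp
  also have "\<dots> = (\<Pi>\<^sub>M j\<in>UNIV. distr M borel (?X j))"
    by (rule PiM_cong) (auto simp: same_marginals)
  also have "\<dots> = distr M ?PS (\<lambda>\<omega>. \<lambda>j\<in>UNIV. ?X j \<omega>)"
    using indep_vars_iff_distr_eq_PiM[where I=UNIV and X="?X"] X_rv indep by simp
  finally have same_law: "distr M ?PS (\<lambda>\<omega>. \<lambda>j\<in>UNIV. ?Z j \<omega>) = distr M ?PS (\<lambda>\<omega>. \<lambda>j\<in>UNIV. ?X j \<omega>)" .
  have "(\<lambda>\<omega>. \<lambda>j\<in>UNIV. ?Z j \<omega>) \<in> measurable M ?PS" "(\<lambda>\<omega>. \<lambda>j\<in>UNIV. ?X j \<omega>) \<in> measurable M ?PS"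
    using Z_rv X_rv by (auto intro!: measurable_restrict)
  then show ?thesis
    using arg_cong[OF same_law, of "\<lambda>N. measure N A"]
    by (simp add: measure_distr A restrict_UNIV vimage_def Int_def conj_commute)
qed

text \<open>Applied at a first passage, the reflection shows that the residual sum is symmetric: the
  flip fixes the waiting times (hence N(1)) and the jump sums up to k, and negates the residual.\<close>
lemma residual_symmetric:
  "prob {\<omega>\<in>space M. first_passage u k \<omega> \<and> residual k \<omega> < 0}
     = prob {\<omega>\<in>space M. first_passage u k \<omega> \<and> 0 < residual k \<omega>}"
proof -
  let ?PS = "PiM (UNIV :: (nat + nat) set) (\<lambda>_. borel :: real measure)"
  let ?N = "poisson_count (\<lambda>i (f::nat + nat \<Rightarrow> real). f (Inr i)) 1"
  have [measurable]: "?N \<in> measurable ?PS (count_space UNIV)"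
    by measurable
  have [measurable]: "(\<lambda>f. \<Sum>i\<in>{k..<?N f}. f (Inl i)) \<in> borel_measurable ?PS"
    by (rule measurable_compose_countable[where f="\<lambda>n f. \<Sum>i\<in>{k..<n}. f (Inl i)" and g="?N"])
      measurable
  let ?A = "{f\<in>space ?PS. (u < (\<Sum>i<k. f (Inl i)) \<and> (\<forall>j<k. (\<Sum>i<j. f (Inl i)) \<le> u))
                         \<and> (\<Sum>i\<in>{k..<?N f}. f (Inl i)) < 0}"
  have "?A \<in> sets ?PS" by measurable
  moreover have "?N (\<lambda>j. case_sum Y E j \<omega>) = count1 \<omega>"
    and "?N (\<lambda>j. flip_jumps_from k j (case_sum Y E j \<omega>)) = count1 \<omega>" for \<omega>
    by (simp_all add: poisson_count_def flip_jumps_from_def)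
  moreover have "(\<Sum>i<j. flip_jumps_from k (Inl i) (Y i \<omega>)) = jump_sum j \<omega>" if "j \<le> k" for j \<omega>
    using that by (intro sum.cong) (auto simp: flip_jumps_from_def)
  moreover have "(\<Sum>i\<in>{k..<n}. flip_jumps_from k (Inl i) (Y i \<omega>)) = - (\<Sum>i\<in>{k..<n}. Y i \<omega>)" for n \<omega>
    by (simp add: flip_jumps_from_def sum_negf[symmetric])
  ultimately show ?thesis
    using reflection[of ?A k] by (simp add: space_PiM)
qed

text \<open>Combining stopping and reflection: at a first passage, the residual sum is nonnegative
  with conditional probability at least (1 + exp(-lam))/2.\<close>
lemma first_passage_bound:
  "(1 + exp (- lam)) * prob {\<omega>\<in>space M. first_passage u k \<omega> \<and> k \<le> count1 \<omega>}
     \<le> 2 * prob {\<omega>\<in>space M. first_passage u k \<omega> \<and> k \<le> count1 \<omega> \<and> 0 \<le> residual k \<omega>}"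
proof -
  let ?all = "{\<omega>\<in>space M. first_passage u k \<omega> \<and> k \<le> count1 \<omega>}"
  let ?nonneg = "{\<omega>\<in>space M. first_passage u k \<omega> \<and> k \<le> count1 \<omega> \<and> 0 \<le> residual k \<omega>}"
  let ?neg = "{\<omega>\<in>space M. first_passage u k \<omega> \<and> residual k \<omega> < 0}"
  let ?pos = "{\<omega>\<in>space M. first_passage u k \<omega> \<and> 0 < residual k \<omega>}"
  let ?stop = "{\<omega>\<in>space M. first_passage u k \<omega> \<and> count1 \<omega> = k}"
  have nonempty_residual: "residual k \<omega> \<noteq> 0 \<Longrightarrow> k \<le> count1 \<omega>" for \<omega>
    by (cases "k \<le> count1 \<omega>") auto
  have "?all = ?nonneg \<union> ?neg" "?nonneg \<inter> ?neg = {}"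
    using nonempty_residual by force+
  then have split: "prob ?all = prob ?nonneg + prob ?neg"
    by (simp add: finite_measure_Union)
  have "?stop \<union> ?pos \<subseteq> ?nonneg" "?stop \<inter> ?pos = {}"
    using nonempty_residual by force+
  then have "prob ?stop + prob ?pos \<le> prob ?nonneg"
    using finite_measure_mono[of "?stop \<union> ?pos" ?nonneg] by (simp add: finite_measure_Union)
  then show ?thesis
    using split residual_symmetric[of u k] prob_stop_at_passage[of u k] by (simp add: algebra_simps)
qed

lemma AE_sup_exceeds_imp_passage:
  "AE \<omega> in M. u < (SUP t\<in>{0..1}. compound_poisson Y E t \<omega>) \<longrightarrow> (\<exists>k. first_passage u k \<omega> \<and> k \<le> count1 \<omega>)"
  using AE_count_le_count1
proof eventually_elim
  case (elim \<omega>)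
  show ?case
  proof
    assume exceeds: "u < (SUP t\<in>{0..1}. compound_poisson Y E t \<omega>)"
    have "(\<lambda>t. compound_poisson Y E t \<omega>) ` {0..1} \<subseteq> (\<lambda>n. jump_sum n \<omega>) ` {..count1 \<omega>}"
    proof
      fix x assume "x \<in> (\<lambda>t. compound_poisson Y E t \<omega>) ` {0..1}"
      then obtain t where "t \<in> {0..1}" "x = jump_sum (poisson_count E t \<omega>) \<omega>"
        unfolding compound_poisson_def by blast
      with elim show "x \<in> (\<lambda>n. jump_sum n \<omega>) ` {..count1 \<omega>}"
        by blast
    qed
    then have bdd: "bdd_above ((\<lambda>t. compound_poisson Y E t \<omega>) ` {0..1})"
      by (meson bdd_above_mono finite_atMost finite_imageI bdd_above_finite)
    obtain t where t: "t \<in> {0..1}" "u < compound_poisson Y E t \<omega>"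
      using exceeds less_cSUP_iff[OF _ bdd] by auto
    then have above: "u < jump_sum (poisson_count E t \<omega>) \<omega>"
      by (simp add: compound_poisson_def)
    define k where "k = (LEAST j. u < jump_sum j \<omega>)"
    have "u < jump_sum k \<omega>"
      unfolding k_def by (rule LeastI[where P="\<lambda>j. u < jump_sum j \<omega>", OF above])
    moreover have "\<forall>j<k. jump_sum j \<omega> \<le> u"
      unfolding k_def using not_less_Least by force
    moreover have "k \<le> poisson_count E t \<omega>"
      unfolding k_def by (rule Least_le[where P="\<lambda>j. u < jump_sum j \<omega>", OF above])
    moreover have "poisson_count E t \<omega> \<le> count1 \<omega>"
      using elim t(1) by blast
    ultimately show "\<exists>k. first_passage u k \<omega> \<and> k \<le> count1 \<omega>"
      by (intro exI[of _ k]) simp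
  qed
qed

text \<open>At a first passage k \<le> N(1) with nonnegative residual sum, X(1) = S k + R k > u.\<close>
lemma passage_imp_exceeds:
  assumes "first_passage u k \<omega>" "k \<le> count1 \<omega>" "0 \<le> residual k \<omega>"
  shows "u < compound_poisson Y E 1 \<omega>"
proof -
  have "compound_poisson Y E 1 \<omega> = jump_sum k \<omega> + residual k \<omega>"
    using sum.atLeastLessThan_concat[of 0 k "count1 \<omega>" "\<lambda>i. Y i \<omega>"] assms(2)
    by (simp add: compound_poisson_def atLeast0LessThan)
  with assms show ?thesis by linarith
qed

lemma first_passages_disjoint:
  "disjoint_family (\<lambda>k. {\<omega>\<in>space M. first_passage u k \<omega> \<and> P k \<omega>})"
  unfolding disjoint_family_on_def
proof (intro ballI impI)
  fix m n :: nat
  assume "m \<noteq> n"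
  then consider "m < n" | "n < m" by linarith
  then show "{\<omega>\<in>space M. first_passage u m \<omega> \<and> P m \<omega>} \<inter> {\<omega>\<in>space M. first_passage u n \<omega> \<and> P n \<omega>} = {}"
    by cases force+
qed

text \<open>The bound for every level u: sum the first-passage bound over k, using that the
  first passages are disjoint and exhaust the event that the supremum exceeds u.\<close>
lemma sup_tail_bound:
  "prob {\<omega>\<in>space M. u < (SUP t\<in>{0..1}. compound_poisson Y E t \<omega>)}
     \<le> (2 / (1 + exp (- lam))) * prob {\<omega>\<in>space M. u < compound_poisson Y E 1 \<omega>}"
proof -
  let ?K = "2 / (1 + exp (- lam))"
  let ?all = "\<lambda>k. {\<omega>\<in>space M. first_passage u k \<omega> \<and> k \<le> count1 \<omega>}"
  let ?nonneg = "\<lambda>k. {\<omega>\<in>space M. first_passage u k \<omega> \<and> k \<le> count1 \<omega> \<and> 0 \<le> residual k \<omega>}"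
  have K_pos: "0 < 1 + exp (- lam)"
    by (simp add: add_pos_pos)
  have each: "prob (?all k) \<le> ?K * prob (?nonneg k)" for k
    using first_passage_bound[of u k] K_pos by (simp add: field_simps)
  have sums_nonneg: "(\<lambda>k. ?K * prob (?nonneg k)) sums (?K * prob (\<Union>k. ?nonneg k))"
    by (intro sums_mult finite_measure_UNION first_passages_disjoint) auto
  have summable_all: "summable (\<lambda>k. prob (?all k))"
    by (rule summable_comparison_test[OF _ sums_summable[OF sums_nonneg]]) (use each in auto)
  have "prob {\<omega>\<in>space M. u < (SUP t\<in>{0..1}. compound_poisson Y E t \<omega>)} \<le> prob (\<Union>k. ?all k)"
    by (rule finite_measure_mono_AE) (use AE_sup_exceeds_imp_passage[of u] in auto)
  also have "\<dots> \<le> (\<Sum>k. prob (?all k))"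
    by (rule finite_measure_subadditive_countably[OF _ summable_all]) auto
  also have "\<dots> \<le> (\<Sum>k. ?K * prob (?nonneg k))"
    by (rule suminf_le[OF each summable_all sums_summable[OF sums_nonneg]])
  also have "\<dots> = ?K * prob (\<Union>k. ?nonneg k)"
    using sums_nonneg by (rule sums_unique[symmetric])
  also have "\<dots> \<le> ?K * prob {\<omega>\<in>space M. u < compound_poisson Y E 1 \<omega>}"
  proof (rule mult_left_mono)
    show "prob (\<Union>k. ?nonneg k) \<le> prob {\<omega>\<in>space M. u < compound_poisson Y E 1 \<omega>}"
    proof (rule finite_measure_mono)
      show "(\<Union>k. ?nonneg k) \<subseteq> {\<omega>\<in>space M. u < compound_poisson Y E 1 \<omega>}"
      proof
        fix \<omega> assume "\<omega> \<in> (\<Union>k. ?nonneg k)"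
        then obtain k where "\<omega> \<in> ?nonneg k" by blast
        then show "\<omega> \<in> {\<omega>\<in>space M. u < compound_poisson Y E 1 \<omega>}"
          using passage_imp_exceeds[where u=u and k=k and \<omega>=\<omega>] by simp
      qed
    qed measurable
  qed (use K_pos in \<open>simp add: less_imp_le\<close>)
  finally show ?thesis .
qed

text \<open>The same bound for the ratio of the two tail probabilities (a ratio with vanishing
  denominator is 0).\<close>
lemma tail_ratio_bound:
  "prob {\<omega>\<in>space M. u < (SUP t\<in>{0..1}. compound_poisson Y E t \<omega>)}
     / prob {\<omega>\<in>space M. u < compound_poisson Y E 1 \<omega>} \<le> 2 / (1 + exp (- lam))"
proof (cases "prob {\<omega>\<in>space M. u < compound_poisson Y E 1 \<omega>} = 0")
  case False
  then have "0 < prob {\<omega>\<in>space M. u < compound_poisson Y E 1 \<omega>}"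
    using measure_nonneg[of M "{\<omega>\<in>space M. u < compound_poisson Y E 1 \<omega>}"] by linarith
  then show ?thesis
    using sup_tail_bound[of u] by (simp add: divide_le_eq)
qed (simp add: add_pos_pos less_imp_le)

end

theorem mainTheorem17:
  fixes M :: "'a measure" and Y E :: "nat \<Rightarrow> 'a \<Rightarrow> real" and lam :: real
  assumes "prob_space M"
    and "lam > 0"
    and indep: "prob_space.indep_vars M (\<lambda>_. borel) (case_sum Y E) UNIV"
    and expo: "\<And>i. distributed M lborel (E i) (exponential_density lam)"
    and rv: "\<And>k. Y k \<in> borel_measurable M"
    and ident: "\<And>k. distr M borel (Y k) = distr M borel (Y 0)"
    and symm: "distr M borel (\<lambda>\<omega>. - Y 0 \<omega>) = distr M borel (Y 0)"
    and nonzero: "\<not> (AE \<omega> in M. Y 0 \<omega> = 0)"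
  shows "Limsup at_top (\<lambda>u::real. ereal
           (measure M {\<omega> \<in> space M. (SUP t\<in>{0..1}. compound_poisson Y E t \<omega>) > u}
            / measure M {\<omega> \<in> space M. compound_poisson Y E 1 \<omega> > u})) < 2"
proof -
  interpret compound_poisson_model M Y E lam
    unfolding compound_poisson_model_def compound_poisson_model_axioms_def using assms by auto
  have "Limsup at_top (\<lambda>u::real. ereal
           (measure M {\<omega> \<in> space M. (SUP t\<in>{0..1}. compound_poisson Y E t \<omega>) > u}
            / measure M {\<omega> \<in> space M. compound_poisson Y E 1 \<omega> > u}))
        \<le> ereal (2 / (1 + exp (- lam)))"
    using tail_ratio_bound by (intro Limsup_bounded always_eventually) simp
  also have "\<dots> < 2"
    using \<open>lam > 0\<close> by (simp add: divide_less_eq add_pos_pos)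
  finally show ?thesis .
qed

end
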